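(* (i) Every invertible linear map $A:\mathcal{F}_p\to\mathcal{F}_c$ or $\mathcal{F}_c\to\mathcal{F}_p$, $f\mapsto fA$, preserves static equilibrium. Every projective duality of a statics problem can be described as the composition of a linear-map equivalence class $A_\sim=\{\lambda A:\lambda\ne0\}$ acting on the forces and an equilibrium preserving congruence of the force system, and every such composition gives a projective duality of the statics problem. (ii) Every invertible linear map $A:\mathcal{E}_p\to\mathcal{E}_c$ or $\mathcal{E}_c\to\mathcal{E}_p$, $e\mapsto eA$, preserves compatibility. Every projective duality of a kinematics problem can be described as the composition of a linear-map equivalence class acting on the velocities and a compatibility preserving congruence of the velocity system, and every such composition gives a projective duality of the kinematics problem.
   Context: Points of the real projective plane $PG(2)$ are classes of nonzero vectors of $\mathbb{R}^3$ up to nonzero scaling ($\vec p\in\mathbb{R}^2$ is $(\vec p,1)$, ideal points are $(\vec u,0)$); lines are also represented by nonzero vectors up to scaling, and $p$ lies on $l$ iff $\langle p,l\rangle=0$. A duality of $PG(2)$ maps points to lines and lines to points preserving incidence; it is given by an invertible $3\times 3$ matrix $A$ up to scaling, with points $p\mapsto$ lines $pA$ and lines $l\mapsto$ points $lA^{-T}$. Mechanical quantities (bodies in the $x,y$ plane): $\mathcal{F}_p$: coplanar force with components $F_x,F_y$ and moment $M_z$ about the origin is $f=(-F_y,F_x,M_z)$, representing its line of action. $\mathcal{F}_c$: force orthogonal to the plane with $z$-component $F_z$ and moments $M_x,M_y$ about the coordinate axes is $f=(-M_y,M_x,F_z)$, representing its point of action. $\mathcal{E}_c$: planar rigid motion with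 origin velocity $(v_x,v_y)$ and angular velocity $\omega_z$ is $e=(-v_y,v_x,\omega_z)$, representing the point of rotation. $\mathcal{E}_p$: motion with $z$-velocity $v_z$ of the origin and angular velocity components $\omega_x,\omega_y$ is $e=(-\omega_y,\omega_x,v_z)$, representing the line of rotation. Static equilibrium of a force system on a body means its vectors sum to $0$. Compatibility conditions have the form $\langle l,e_j-e_k\rangle=0$ (line $l$, in $\mathcal{E}_c$) or $\langle p,e_j-e_k\rangle=0$ (point $p$, in $\mathcal{E}_p$). A congruence of a force (velocity) system $\{f_i\}$ is $\{f_i\}\mapsto\{\psi_if_i\}$ with $\psi_i\neq0$; it is equilibrium (compatibility) preserving for a problem if equilibrium (compatibility) of all (sub)bodies is preserved. A projective duality of a statics (kinematics) problem is a transformation of the mechanical quantities such that points and lines of attack of the forces (velocities) are transformed into lines and points of attack according to one projective duality of $PG(2)$, and the image is in static equilibrium (compatible) if and only if the original is. *)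

theory Defs
  imports "HOL-Analysis.Analysis"
begin

text \<open>Vectors of R^3 are row vectors; x v* M is the row-vector/matrix product xM.\<close>

text \<open>Two nonzero vectors represent the same element (point or line) of PG(2).\<close>
definition proj_same :: "real^3 \<Rightarrow> real^3 \<Rightarrow> bool" where
  "proj_same u v \<longleftrightarrow> u \<noteq> 0 \<and> v \<noteq> 0 \<and> (\<exists>c. c \<noteq> 0 \<and> v = c *\<^sub>R u)"

text \<open>Image of an element under the projective duality given by the invertible matrix D:
  a point p is mapped to the line pD, a line l to the point l D^{-T}.\<close>
definition dual_img :: "bool \<Rightarrow> real^3^3 \<Rightarrow> real^3 \<Rightarrow> real^3" where
  "dual_img is_line D x = (if is_line then x v* matrix_inv (transpose D) else x v* D)"

text \<open>A statics problem: a set B of (sub)bodies, the force indices I, and for each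
  (sub)body b the set acts b of forces acting on it. A force system is f : I -> R^3.\<close>
definition statics_eq :: "'b set \<Rightarrow> ('b \<Rightarrow> 'i set) \<Rightarrow> ('i \<Rightarrow> real^3) \<Rightarrow> bool" where
  "statics_eq B acts f \<longleftrightarrow> (\<forall>b\<in>B. (\<Sum>i\<in>acts b. f i) = 0)"

definition eq_preserving_congruence ::
  "'b set \<Rightarrow> ('b \<Rightarrow> 'i set) \<Rightarrow> 'i set \<Rightarrow> ('i \<Rightarrow> real^3) \<Rightarrow> ('i \<Rightarrow> real) \<Rightarrow> bool" where
  "eq_preserving_congruence B acts I f \<psi> \<longleftrightarrow>
     (\<forall>i\<in>I. \<psi> i \<noteq> 0) \<and>
     (statics_eq B acts (\<lambda>i. \<psi> i *\<^sub>R f i) \<longleftrightarrow> statics_eq B acts f)"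

text \<open>g is a projective duality of the statics problem with force system f
  (f_is_line: forces are in F_p, i.e. represent lines of action; otherwise F_c, points).\<close>
definition statics_proj_duality ::
  "'b set \<Rightarrow> ('b \<Rightarrow> 'i set) \<Rightarrow> 'i set \<Rightarrow> bool \<Rightarrow> ('i \<Rightarrow> real^3) \<Rightarrow> ('i \<Rightarrow> real^3) \<Rightarrow> bool" where
  "statics_proj_duality B acts I f_is_line f g \<longleftrightarrow>
     (\<exists>D. invertible D \<and> (\<forall>i\<in>I. proj_same (dual_img f_is_line D (f i)) (g i))) \<and>
     (statics_eq B acts g \<longleftrightarrow> statics_eq B acts f)"

text \<open>A kinematics problem: body indices J, a set C of compatibility conditions
  (c, j, k) meaning <c, e_j - e_k> = 0, where c is a line (velocities in E_c) or a
  point (velocities in E_p).\<close>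
definition compatible :: "((real^3) \<times> 'j \<times> 'j) set \<Rightarrow> ('j \<Rightarrow> real^3) \<Rightarrow> bool" where
  "compatible C e \<longleftrightarrow> (\<forall>(c, j, k)\<in>C. c \<bullet> (e j - e k) = 0)"

definition conds_lin :: "real^3^3 \<Rightarrow> ((real^3) \<times> 'j \<times> 'j) set \<Rightarrow> ((real^3) \<times> 'j \<times> 'j) set" where
  "conds_lin A C = (\<lambda>(c, j, k). (c v* matrix_inv (transpose A), j, k)) ` C"

text \<open>Conditions transformed by the projective duality D (the condition elements are
  lines iff the velocities represent points).\<close>
definition conds_dual :: "bool \<Rightarrow> real^3^3 \<Rightarrow> ((real^3) \<times> 'j \<times> 'j) set \<Rightarrow> ((real^3) \<times> 'j \<times> 'j) set" where
  "conds_dual e_is_line D C = (\<lambda>(c, j, k). (dual_img (\<not> e_is_line) D c, j, k)) ` C"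

definition compat_preserving_congruence ::
  "((real^3) \<times> 'j \<times> 'j) set \<Rightarrow> 'j set \<Rightarrow> ('j \<Rightarrow> real^3) \<Rightarrow> ('j \<Rightarrow> real) \<Rightarrow> bool" where
  "compat_preserving_congruence C J e \<psi> \<longleftrightarrow>
     (\<forall>j\<in>J. \<psi> j \<noteq> 0) \<and>
     (compatible C (\<lambda>j. \<psi> j *\<^sub>R e j) \<longleftrightarrow> compatible C e)"

text \<open>g (for the transformed problem) is a projective duality of the kinematics problem
  (C, e) (e_is_line: velocities in E_p, representing lines; otherwise E_c, points).\<close>
definition kin_proj_duality ::
  "((real^3) \<times> 'j \<times> 'j) set \<Rightarrow> 'j set \<Rightarrow> bool \<Rightarrow> ('j \<Rightarrow> real^3) \<Rightarrow> ('j \<Rightarrow> real^3) \<Rightarrow> bool" where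
  "kin_proj_duality C J e_is_line e g \<longleftrightarrow>
     (\<exists>D. invertible D \<and> (\<forall>j\<in>J. proj_same (dual_img e_is_line D (e j)) (g j)) \<and>
          (compatible (conds_dual e_is_line D C) g \<longleftrightarrow> compatible C e))"

end

theory Submission
  imports Defs
begin

text \<open>A duality of PG(2) given by D acts on homogeneous coordinates as the linear map
  x \<mapsto> xT with T = D on points and T = D^{-T} on lines, and every invertible T arises
  from some duality in this way. An invertible linear map commutes with the sums expressing
  equilibrium and kills only the zero vector, so it preserves equilibrium; paired with the
  contragredient map c \<mapsto> cT^{-T} on the compatibility conditions it preserves the pairings
  <c, e_j - e_k>, hence compatibility. A duality determines each image only up to a nonzero
  factor; these factors form the congruence \<psi>, and the requirement that the duality preserve
  equilibrium (compatibility) says precisely that \<psi> does.\<close>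

lemma matrix_inv_right:
  fixes A :: "'a::semiring_1^'n^'n"
  assumes "invertible A"
  shows "A ** matrix_inv A = mat 1"
  using someI_ex[OF assms[unfolded invertible_def]] by (simp add: matrix_inv_def)

lemma matrix_inv_left:
  fixes A :: "'a::semiring_1^'n^'n"
  assumes "invertible A"
  shows "matrix_inv A ** A = mat 1"
  using someI_ex[OF assms[unfolded invertible_def]] by (simp add: matrix_inv_def)

lemma matrix_inv_unique:
  fixes A B :: "'a::semiring_1^'n^'n"
  assumes "A ** B = mat 1" and "B ** A = mat 1"
  shows "matrix_inv A = B"
proof -
  have "invertible A"
    using assms invertible_def by blast
  have "matrix_inv A = matrix_inv A ** (A ** B)"
    using assms by simp
  also have "\<dots> = B"
    using matrix_inv_left[OF \<open>invertible A\<close>] by (simp add: matrix_mul_assoc)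
  finally show ?thesis .
qed

lemma invertible_matrix_inv:
  fixes A :: "'a::semiring_1^'n^'n"
  assumes "invertible A"
  shows "invertible (matrix_inv A)"
  using matrix_inv_left[OF assms] matrix_inv_right[OF assms] invertible_def by blast

lemma matrix_inv_matrix_inv:
  fixes A :: "'a::semiring_1^'n^'n"
  assumes "invertible A"
  shows "matrix_inv (matrix_inv A) = A"
  using matrix_inv_left[OF assms] matrix_inv_right[OF assms] by (rule matrix_inv_unique)

lemma matrix_inv_transpose:
  fixes A :: "'a::comm_semiring_1^'n^'n"
  assumes "invertible A"
  shows "matrix_inv (transpose A) = transpose (matrix_inv A)"
proof (rule matrix_inv_unique)
  show "transpose A ** transpose (matrix_inv A) = mat 1"
    by (metis matrix_inv_left[OF assms] matrix_transpose_mul transpose_mat)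
  show "transpose (matrix_inv A) ** transpose A = mat 1"
    by (metis matrix_inv_right[OF assms] matrix_transpose_mul transpose_mat)
qed

lemma vector_matrix_mul_eq_0_iff:
  fixes A :: "'a::semiring_1^'n^'n"
  assumes "invertible A"
  shows "x v* A = 0 \<longleftrightarrow> x = 0"
proof
  assume "x v* A = 0"
  then have "x v* (A ** matrix_inv A) = 0"
    by (simp add: vector_matrix_mul_assoc[symmetric])
  then show "x = 0"
    using matrix_inv_right[OF assms] by simp
qed simp

lemma sum_vector_matrix_mul:
  fixes A :: "'a::semiring_1^'n^'m"
  shows "(\<Sum>i\<in>S. f i) v* A = (\<Sum>i\<in>S. f i v* A)"
  by (induction S rule: infinite_finite_induct) (simp_all add: vector_matrix_left_distrib)

lemma inner_contragredient_vector_matrix_mul: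
  fixes A :: "real^'n^'n"
  assumes "invertible A"
  shows "(c v* matrix_inv (transpose A)) \<bullet> (x v* A) = c \<bullet> x"
proof -
  have "(c v* matrix_inv (transpose A)) \<bullet> (x v* A)
      = c \<bullet> (matrix_inv (transpose A) *v (transpose A *v x))"
    by (simp only: dot_lmul_matrix transpose_matrix_vector)
  also have "\<dots> = c \<bullet> ((matrix_inv (transpose A) ** transpose A) *v x)"
    by (simp only: matrix_vector_mul_assoc)
  also have "\<dots> = c \<bullet> x"
    using matrix_inv_left[OF transpose_invertible[OF assms]] by simp
  finally show ?thesis .
qed

lemma statics_eq_cong:
  assumes "\<forall>b\<in>B. acts b \<subseteq> I" and "\<forall>i\<in>I. g i = h i"
  shows "statics_eq B acts g \<longleftrightarrow> statics_eq B acts h"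
  unfolding statics_eq_def using assms by (metis (no_types, lifting) subsetD sum.cong)

lemma statics_eq_vector_matrix_mul_iff:
  fixes A :: "real^3^3"
  assumes "invertible A"
  shows "statics_eq B acts (\<lambda>i. f i v* A) \<longleftrightarrow> statics_eq B acts f"
  unfolding statics_eq_def
  by (simp add: sum_vector_matrix_mul[symmetric] vector_matrix_mul_eq_0_iff[OF assms])

lemma compatible_cong:
  assumes "\<forall>(c, j, k)\<in>C. j \<in> J \<and> k \<in> J" and "\<forall>j\<in>J. g j = h j"
  shows "compatible C g \<longleftrightarrow> compatible C h"
  unfolding compatible_def using assms by fastforce

lemma compatible_conds_lin_iff:
  fixes A :: "real^3^3"
  assumes "invertible A"
  shows "compatible (conds_lin A C) (\<lambda>j. e j v* A) \<longleftrightarrow> compatible C e"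
  unfolding compatible_def conds_lin_def
  by (simp add: split_beta vector_matrix_mult_diff_distrib[symmetric]
      inner_contragredient_vector_matrix_mul[OF assms])

definition dual_matrix :: "bool \<Rightarrow> real^3^3 \<Rightarrow> real^3^3" where
  "dual_matrix is_line D = (if is_line then matrix_inv (transpose D) else D)"

lemma dual_img_eq_vector_matrix_mul: "dual_img is_line D x = x v* dual_matrix is_line D"
  unfolding dual_img_def dual_matrix_def by simp

lemma invertible_dual_matrix:
  assumes "invertible D"
  shows "invertible (dual_matrix is_line D)"
  using assms by (simp add: dual_matrix_def invertible_matrix_inv transpose_invertible)

lemma ex_invertible_dual_matrix_iff:
  "(\<exists>D. invertible D \<and> P (dual_matrix is_line D)) \<longleftrightarrow> (\<exists>A. invertible A \<and> P A)"
proof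
  assume "\<exists>D. invertible D \<and> P (dual_matrix is_line D)"
  then obtain D where "invertible D" and "P (dual_matrix is_line D)"
    by blast
  then show "\<exists>A. invertible A \<and> P A"
    by (intro exI[of _ "dual_matrix is_line D"] conjI invertible_dual_matrix)
next
  assume "\<exists>A. invertible A \<and> P A"
  then obtain A where "invertible A" and "P A"
    by blast
  define D where "D = (if is_line then transpose (matrix_inv A) else A)"
  have "invertible D"
    using \<open>invertible A\<close> by (simp add: D_def invertible_matrix_inv transpose_invertible)
  moreover have "dual_matrix is_line D = A"
    using \<open>invertible A\<close> by (simp add: D_def dual_matrix_def matrix_inv_matrix_inv)
  ultimately show "\<exists>D. invertible D \<and> P (dual_matrix is_line D)"
    using \<open>P A\<close> by (intro exI[of _ D]) simp
qed

lemma conds_dual_eq_conds_lin: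
  assumes "invertible D"
  shows "conds_dual e_is_line D C = conds_lin (dual_matrix e_is_line D) C"
proof -
  have "transpose (matrix_inv (transpose D)) = matrix_inv D"
    using matrix_inv_transpose[OF transpose_invertible[OF assms]] by simp
  then have "matrix_inv (transpose (matrix_inv (transpose D))) = D"
    using assms by (simp add: matrix_inv_matrix_inv)
  then have "dual_img (\<not> e_is_line) D c = c v* matrix_inv (transpose (dual_matrix e_is_line D))"
    for c
    by (simp add: dual_img_def dual_matrix_def)
  then show ?thesis
    unfolding conds_dual_def conds_lin_def by (simp only:)
qed

lemma proj_same_iff_scaleR:
  assumes "u \<noteq> 0"
  shows "proj_same u v \<longleftrightarrow> (\<exists>c. c \<noteq> 0 \<and> v = c *\<^sub>R u)"
  using assms unfolding proj_same_def by auto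

lemma ball_proj_same_iff_ex_scaling:
  assumes "\<forall>i\<in>I. u i \<noteq> 0"
  shows "(\<forall>i\<in>I. proj_same (u i) (g i)) \<longleftrightarrow>
    (\<exists>\<psi>. (\<forall>i\<in>I. \<psi> i \<noteq> 0) \<and> (\<forall>i\<in>I. g i = \<psi> i *\<^sub>R u i))"
  using assms by (auto simp: proj_same_iff_scaleR bchoice_iff)

lemma statics_proj_duality_iff:
  assumes acts: "\<forall>b\<in>B. acts b \<subseteq> I" and nonzero: "\<forall>i\<in>I. f i \<noteq> 0"
  shows "statics_proj_duality B acts I f_is_line f g \<longleftrightarrow>
    (\<exists>A \<psi>. invertible A \<and> eq_preserving_congruence B acts I (\<lambda>i. f i v* A) \<psi> \<and>
      (\<forall>i\<in>I. g i = \<psi> i *\<^sub>R (f i v* A)))"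
proof -
  have scaling: "(\<forall>i\<in>I. proj_same (f i v* A) (g i)) \<longleftrightarrow>
      (\<exists>\<psi>. (\<forall>i\<in>I. \<psi> i \<noteq> 0) \<and> (\<forall>i\<in>I. g i = \<psi> i *\<^sub>R (f i v* A)))"
    if "invertible A" for A
    using nonzero by (intro ball_proj_same_iff_ex_scaling) (simp add: vector_matrix_mul_eq_0_iff[OF that])
  have equilibrium: "(statics_eq B acts g \<longleftrightarrow> statics_eq B acts f) \<longleftrightarrow>
      (statics_eq B acts (\<lambda>i. \<psi> i *\<^sub>R (f i v* A)) \<longleftrightarrow> statics_eq B acts (\<lambda>i. f i v* A))"
    if "invertible A" and "\<forall>i\<in>I. g i = \<psi> i *\<^sub>R (f i v* A)" for A \<psi>
    using statics_eq_cong[OF acts that(2)] statics_eq_vector_matrix_mul_iff[OF that(1), of B acts f]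
    by simp
  have "statics_proj_duality B acts I f_is_line f g \<longleftrightarrow>
      (\<exists>A. invertible A \<and> (\<forall>i\<in>I. proj_same (f i v* A) (g i))) \<and>
      (statics_eq B acts g \<longleftrightarrow> statics_eq B acts f)"
    unfolding statics_proj_duality_def dual_img_eq_vector_matrix_mul
    using ex_invertible_dual_matrix_iff[of "\<lambda>A. \<forall>i\<in>I. proj_same (f i v* A) (g i)"] by simp
  also have "\<dots> \<longleftrightarrow> (\<exists>A \<psi>. invertible A \<and> eq_preserving_congruence B acts I (\<lambda>i. f i v* A) \<psi> \<and>
      (\<forall>i\<in>I. g i = \<psi> i *\<^sub>R (f i v* A)))"
    unfolding eq_preserving_congruence_def using scaling equilibrium by blast
  finally show ?thesis .
qed

lemma kin_proj_duality_iff: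
  assumes conds: "\<forall>(c, j, k)\<in>C. j \<in> J \<and> k \<in> J" and nonzero: "\<forall>j\<in>J. e j \<noteq> 0"
  shows "kin_proj_duality C J e_is_line e g \<longleftrightarrow>
    (\<exists>A \<psi>. invertible A \<and> compat_preserving_congruence (conds_lin A C) J (\<lambda>j. e j v* A) \<psi> \<and>
      (\<forall>j\<in>J. g j = \<psi> j *\<^sub>R (e j v* A)))"
proof -
  have scaling: "(\<forall>j\<in>J. proj_same (e j v* A) (g j)) \<longleftrightarrow>
      (\<exists>\<psi>. (\<forall>j\<in>J. \<psi> j \<noteq> 0) \<and> (\<forall>j\<in>J. g j = \<psi> j *\<^sub>R (e j v* A)))"
    if "invertible A" for A
    using nonzero by (intro ball_proj_same_iff_ex_scaling) (simp add: vector_matrix_mul_eq_0_iff[OF that])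
  have compatibility: "(compatible (conds_lin A C) g \<longleftrightarrow> compatible C e) \<longleftrightarrow>
      (compatible (conds_lin A C) (\<lambda>j. \<psi> j *\<^sub>R (e j v* A)) \<longleftrightarrow>
       compatible (conds_lin A C) (\<lambda>j. e j v* A))"
    if "invertible A" and "\<forall>j\<in>J. g j = \<psi> j *\<^sub>R (e j v* A)" for A \<psi>
  proof -
    have "\<forall>(c, j, k)\<in>conds_lin A C. j \<in> J \<and> k \<in> J"
      using conds by (auto simp: conds_lin_def)
    then show ?thesis
      using compatible_cong[OF _ that(2)] compatible_conds_lin_iff[OF that(1), of C e] by simp
  qed
  have "kin_proj_duality C J e_is_line e g \<longleftrightarrow>
      (\<exists>D. invertible D \<and> (\<forall>j\<in>J. proj_same (e j v* dual_matrix e_is_line D) (g j)) \<and>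
        (compatible (conds_lin (dual_matrix e_is_line D) C) g \<longleftrightarrow> compatible C e))"
    unfolding kin_proj_duality_def dual_img_eq_vector_matrix_mul
    by (simp add: conds_dual_eq_conds_lin cong: conj_cong)
  also have "\<dots> \<longleftrightarrow> (\<exists>A. invertible A \<and> (\<forall>j\<in>J. proj_same (e j v* A) (g j)) \<and>
      (compatible (conds_lin A C) g \<longleftrightarrow> compatible C e))"
    by (rule ex_invertible_dual_matrix_iff)
  also have "\<dots> \<longleftrightarrow> (\<exists>A \<psi>. invertible A \<and>
      compat_preserving_congruence (conds_lin A C) J (\<lambda>j. e j v* A) \<psi> \<and>
      (\<forall>j\<in>J. g j = \<psi> j *\<^sub>R (e j v* A)))"
    unfolding compat_preserving_congruence_def using scaling compatibility by blast
  finally show ?thesis .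
qed

theorem theorem4:
  fixes B :: "'b set" and acts :: "'b \<Rightarrow> 'i set" and I :: "'i set"
    and f :: "'i \<Rightarrow> real^3" and f_is_line :: bool
    and C :: "((real^3) \<times> 'j \<times> 'j) set" and J :: "'j set"
    and e :: "'j \<Rightarrow> real^3" and e_is_line :: bool
  assumes "finite I" and "\<forall>b\<in>B. acts b \<subseteq> I" and "\<forall>i\<in>I. f i \<noteq> 0"
    and "\<forall>(c, j, k)\<in>C. c \<noteq> 0 \<and> j \<in> J \<and> k \<in> J" and "\<forall>j\<in>J. e j \<noteq> 0"
  shows
    "((\<forall>A::real^3^3. invertible A \<longrightarrow>
         (statics_eq B acts (\<lambda>i. f i v* A) \<longleftrightarrow> statics_eq B acts f)) \<and>
      (\<forall>g. statics_proj_duality B acts I f_is_line f g \<longleftrightarrow>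
         (\<exists>(A::real^3^3) \<psi>. invertible A \<and>
            eq_preserving_congruence B acts I (\<lambda>i. f i v* A) \<psi> \<and>
            (\<forall>i\<in>I. g i = \<psi> i *\<^sub>R (f i v* A)))))
     \<and>
     ((\<forall>A::real^3^3. invertible A \<longrightarrow>
         (compatible (conds_lin A C) (\<lambda>j. e j v* A) \<longleftrightarrow> compatible C e)) \<and>
      (\<forall>g. kin_proj_duality C J e_is_line e g \<longleftrightarrow>
         (\<exists>(A::real^3^3) \<psi>. invertible A \<and>
            compat_preserving_congruence (conds_lin A C) J (\<lambda>j. e j v* A) \<psi> \<and>
            (\<forall>j\<in>J. g j = \<psi> j *\<^sub>R (e j v* A)))))"
proof -
  have conds: "\<forall>(c, j, k)\<in>C. j \<in> J \<and> k \<in> J"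
    using assms(4) by auto
  show ?thesis
    using statics_eq_vector_matrix_mul_iff statics_proj_duality_iff[OF assms(2,3)]
      compatible_conds_lin_iff kin_proj_duality_iff[OF conds assms(5)]
    by blast
qed

end
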